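(* Let $T\in\mathcal{L}(\mathcal{H})$ be a hypo-EP operator. Then $TT^\dagger(T+T^* )=(T+T^* )TT^\dagger$ if and only if $T$ is an EP operator.
   Context: $\mathcal{H}$ is a Hilbert space, $\mathcal{L}(\mathcal{H})$ the bounded operators on it. For $T$ with closed range, $T^\dagger$ is its Moore–Penrose inverse (unique solution of $TT^\dagger T=T$, $T^\dagger TT^\dagger=T^\dagger$, $(T^\dagger T)^*=T^\dagger T$, $(TT^\dagger)^*=TT^\dagger$). $R(\cdot)$ denotes range. $T$ is EP if $T$ has closed range and $R(T)=R(T^* )$. $T$ is hypo-EP if $T$ has closed range and $T^\dagger T-TT^\dagger\ge 0$, equivalently $R(T)\subset R(T^* )$. *)

theory Defs
  imports "HOL-Analysis.Analysis"
begin

text \<open>Hilbert space: a complete real inner product space, type class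
  real_inner + complete_space. Bounded operators: bounded_linear maps.\<close>

definition is_adjoint :: "('a::real_inner \<Rightarrow> 'a) \<Rightarrow> ('a \<Rightarrow> 'a) \<Rightarrow> bool" where
  "is_adjoint T S \<longleftrightarrow> (\<forall>x y. inner (T x) y = inner x (S y))"

definition self_adjoint_op :: "('a::real_inner \<Rightarrow> 'a) \<Rightarrow> bool" where
  "self_adjoint_op A \<longleftrightarrow> is_adjoint A A"

definition is_MP_inverse :: "('a::real_inner \<Rightarrow> 'a) \<Rightarrow> ('a \<Rightarrow> 'a) \<Rightarrow> bool" where
  "is_MP_inverse T X \<longleftrightarrow> bounded_linear X \<and>
     T \<circ> X \<circ> T = T \<and> X \<circ> T \<circ> X = X \<and>
     self_adjoint_op (X \<circ> T) \<and> self_adjoint_op (T \<circ> X)"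

text \<open>EP and hypo-EP, for T with adjoint S.\<close>
definition EP_op :: "('a::real_inner \<Rightarrow> 'a) \<Rightarrow> ('a \<Rightarrow> 'a) \<Rightarrow> bool" where
  "EP_op T S \<longleftrightarrow> closed (range T) \<and> range T = range S"

definition hypo_EP_op :: "('a::real_inner \<Rightarrow> 'a) \<Rightarrow> ('a \<Rightarrow> 'a) \<Rightarrow> bool" where
  "hypo_EP_op T S \<longleftrightarrow> closed (range T) \<and> range T \<subseteq> range S"

end

theory Submission
  imports Defs
begin

text \<open>With \<open>P = T T\<^sup>\<dagger>\<close> the orthogonal projection onto \<open>R(T)\<close> we always have \<open>P T = T\<close> and
  \<open>T\<^sup>* P = T\<^sup>*\<close>, so the commutation \<open>P (T + T\<^sup>*) = (T + T\<^sup>*) P\<close> reads \<open>T + P T\<^sup>* = T P + T\<^sup>*\<close>.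
  Applying \<open>P\<close> to it gives \<open>T P = T\<close>, hence \<open>P T\<^sup>* = T\<^sup>*\<close>, i.e. \<open>R(T\<^sup>*) \<subseteq> R(T)\<close>; conversely
  \<open>P T\<^sup>* = T\<^sup>*\<close> gives \<open>T P = T\<close> by taking adjoints. Together with the hypo-EP inclusion
  \<open>R(T) \<subseteq> R(T\<^sup>*)\<close> this is exactly the EP property.\<close>

lemma MP_projection_fixes_range:
  assumes "is_MP_inverse T X"
  shows "T (X (T x)) = T x"
  using assms unfolding is_MP_inverse_def by (metis comp_apply)

lemma MP_projection_eq_iff_in_range:
  assumes "is_MP_inverse T X"
  shows "T (X y) = y \<longleftrightarrow> y \<in> range T"
  using MP_projection_fixes_range[OF assms] by (metis rangeE rangeI)

lemma MP_projection_self_adjoint: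
  assumes "is_MP_inverse T X"
  shows "inner (T (X x)) y = inner x (T (X y))"
  using assms unfolding is_MP_inverse_def self_adjoint_op_def is_adjoint_def by simp

lemma adjoint_comp_MP_projection:
  assumes "is_adjoint T S" and "is_MP_inverse T X"
  shows "S (T (X x)) = S x"
proof -
  have adj: "inner (T a) b = inner a (S b)" for a b
    using assms(1) by (simp add: is_adjoint_def)
  have "inner (S (T (X x))) y = inner (S x) y" for y
  proof -
    have "inner (S (T (X x))) y = inner (T y) (T (X x))"
      by (simp add: adj inner_commute)
    also have "\<dots> = inner (T (X (T y))) x"
      using MP_projection_self_adjoint[OF assms(2)] by (simp add: inner_commute)
    also have "\<dots> = inner (S x) y"
      by (metis MP_projection_fixes_range[OF assms(2)] adj inner_commute)
    finally show ?thesis .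
  qed
  then show ?thesis using vector_eq_rdot by blast
qed

lemma comp_MP_projection_if_adjoint_range_subset:
  assumes "is_adjoint T S" and "is_MP_inverse T X" and "range S \<subseteq> range T"
  shows "T (T (X x)) = T x"
proof -
  have PS: "T (X (S y)) = S y" for y
    using assms(3) MP_projection_eq_iff_in_range[OF assms(2)] by blast
  have "inner (T (T (X x))) y = inner (T x) y" for y
  proof -
    have "inner (T (T (X x))) y = inner x (T (X (S y)))"
      using assms(1) MP_projection_self_adjoint[OF assms(2)] by (simp add: is_adjoint_def)
    also have "\<dots> = inner (T x) y"
      using assms(1) by (simp add: PS is_adjoint_def)
    finally show ?thesis .
  qed
  then show ?thesis using vector_eq_rdot by blast
qed

lemma MP_projection_commutes_with_self_plus_adjoint_iff:
  assumes "linear T" and "is_adjoint T S" and "is_MP_inverse T X"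
  shows "T \<circ> X \<circ> (\<lambda>x. T x + S x) = (\<lambda>x. T x + S x) \<circ> T \<circ> X \<longleftrightarrow> range S \<subseteq> range T"
proof -
  have "linear X" using assms(3) by (simp add: is_MP_inverse_def bounded_linear.linear)
  then have P_add: "T (X (a + b)) = T (X a) + T (X b)" for a b
    using assms(1) by (simp add: linear_add)
  note PT = MP_projection_fixes_range[OF assms(3)]
  note SP = adjoint_comp_MP_projection[OF assms(2,3)]
  show ?thesis
  proof
    assume "T \<circ> X \<circ> (\<lambda>x. T x + S x) = (\<lambda>x. T x + S x) \<circ> T \<circ> X"
    then have comm: "T x + T (X (S x)) = T (T (X x)) + S x" for x
      by (metis (no_types, lifting) comp_apply P_add PT SP)
    have TP: "T (T (X x)) = T x" for x
    proof -
      have "T (X (T x + T (X (S x)))) = T (X (T (T (X x)) + S x))"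
        by (simp add: comm)
      then show ?thesis by (simp add: P_add PT)
    qed
    show "range S \<subseteq> range T"
    proof
      fix y assume "y \<in> range S"
      then obtain x where "y = S x" by blast
      with comm TP have "y = T (X (S x))" by (metis add_left_cancel)
      then show "y \<in> range T" by blast
    qed
  next
    assume range: "range S \<subseteq> range T"
    have PS: "T (X (S y)) = S y" for y
      using range MP_projection_eq_iff_in_range[OF assms(3)] by blast
    show "T \<circ> X \<circ> (\<lambda>x. T x + S x) = (\<lambda>x. T x + S x) \<circ> T \<circ> X"
      by (simp add: fun_eq_iff P_add PS PT SP
          comp_MP_projection_if_adjoint_range_subset[OF assms(2,3) range])
  qed
qed

theorem mainTheorem2:
  fixes T S X :: "'a::{real_inner, complete_space} \<Rightarrow> 'a"
  assumes "bounded_linear T"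
    and "is_adjoint T S"
    and "is_MP_inverse T X"
    and "hypo_EP_op T S"
  shows "(T \<circ> X \<circ> (\<lambda>x. T x + S x) = (\<lambda>x. T x + S x) \<circ> T \<circ> X) \<longleftrightarrow> EP_op T S"
proof -
  have "EP_op T S \<longleftrightarrow> range S \<subseteq> range T"
    using assms(4) unfolding hypo_EP_op_def EP_op_def by blast
  then show ?thesis
    using MP_projection_commutes_with_self_plus_adjoint_iff[OF bounded_linear.linear[OF assms(1)] assms(2,3)]
    by simp
qed

end
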